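(* Let $K\subset\mathbb R^{d_1}$ be compact and $f:K\to\mathbb R^{d_3}$ continuous. For every $\epsilon>0$ there exist $d_2>0$, $W_1\in\mathrm{Mat}(d_2,d_1)$, $W_2\in\mathrm{Mat}(d_3,d_2)$ and $b\in\mathbb R^{d_2}$ such that the function $f^U_{W_1,W_2,b}(x)=W_2\cdot\sigma_{\mathbb R^{d_2}}(W_1x+b)$ satisfies $\|f^U_{W_1,W_2,b}-f\|_{L^2(K)}<\epsilon$.
   Context: For $n\ge1$, $\sigma_{\mathbb R^n}:\mathbb R^n\to\mathbb R^n$ is defined by $\sigma_{\mathbb R^n}(x)_i=\dfrac{e^{2x_i}}{1+\sum_{j=1}^ne^{2x_j}}$, $i=1,\dots,n$ (the softmax on $(0,x_1,\dots,x_n)$ with the $0$-th component dropped; its image is the interior of the standard simplex with vertices $0,\epsilon_1,\dots,\epsilon_n$). The $L^2(K)$-norm is with respect to Lebesgue measure and the Euclidean norm on $\mathbb R^{d_3}$. *)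

theory Defs
  imports "HOL-Analysis.Analysis"
begin

text \<open>The map sigma on R^n, with vectors in R^n represented as functions
  nat => real restricted to the indices 0..n-1 (index i corresponds to the
  paper's coordinate i+1).\<close>
definition sigmaR :: "nat \<Rightarrow> (nat \<Rightarrow> real) \<Rightarrow> (nat \<Rightarrow> real)" where
  "sigmaR n y = (\<lambda>i. exp (2 * y i) / (1 + (\<Sum>j<n. exp (2 * y j))))"

text \<open>The hidden dimension d2 is a
  natural number; W1 is given by its d2 rows (vectors in R^d1), W2 by its entries
  W2 k i (k a row index in the output type, i < d2), b by its d2 entries.\<close>
definition netU :: "nat \<Rightarrow> (nat \<Rightarrow> real^'n) \<Rightarrow> ('m \<Rightarrow> nat \<Rightarrow> real) \<Rightarrow> (nat \<Rightarrow> real)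
     \<Rightarrow> real^'n \<Rightarrow> real^'m" where
  "netU d2 W1 W2 b x =
     (\<chi> k. \<Sum>i<d2. W2 k i * sigmaR d2 (\<lambda>j. W1 j \<bullet> x + b j) i)"

definition L2normK :: "(real^'n) set \<Rightarrow> (real^'n \<Rightarrow> real^'m) \<Rightarrow> real" where
  "L2normK K g = sqrt (LINT x:K|lborel. (norm (g x))^2)"

end

theory Submission imports Defs begin

text \<open>By Stone--Weierstrass, the exponential sums \<open>x \<mapsto> \<Sum>v\<in>W. c v * exp (v \<bullet> x)\<close> are
  uniformly dense in the continuous functions on \<open>K\<close>; all components of \<open>f\<close> can be approximated
  with one common finite frequency set \<open>W\<close>. Taking one hidden neuron per frequency, with
  \<open>W\<^sub>1 x + b = (v \<bullet> x + ln t) / 2\<close>, the network computes \<open>G\<^sub>k(x) / (1 + t S(x))\<close>, where \<open>G\<^sub>k\<close> is the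
  approximating exponential sum and \<open>S(x) = \<Sum>v\<in>W. exp (v \<bullet> x)\<close>. The extra \<open>1\<close> in the
  denominator of \<open>\<sigma>\<close> is made negligible by letting the scale \<open>t\<close> tend to \<open>0\<close>, and a uniform
  bound on the compact set \<open>K\<close> of finite measure bounds the \<open>L\<^sup>2\<close> norm.\<close>

lemma L2normK_le_of_norm_bound:
  fixes K :: "(real^'n) set" and g :: "real^'n \<Rightarrow> real^'m"
  assumes K: "compact K" and bound: "\<And>x. x \<in> K \<Longrightarrow> norm (g x) \<le> \<delta>" and "\<delta> \<ge> 0"
  shows "L2normK K g \<le> \<delta> * sqrt (measure lborel K)"
proof -
  have K_sets: "K \<in> sets lborel"
    using K by (simp add: compact_imp_closed)
  have K_finite: "emeasure lborel K < \<infinity>"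
    using K emeasure_bounded_finite[of K] by (simp add: compact_imp_bounded less_top)
  have const_integrable: "set_integrable lborel K (\<lambda>_. \<delta>^2)"
    unfolding set_integrable_def using K_sets K_finite
    by (intro integrable_mult_left integrable_indicator) auto
  have "(LINT x:K|lborel. (norm (g x))^2) \<le> \<delta>^2 * measure lborel K"
  proof (cases "set_integrable lborel K (\<lambda>x. (norm (g x))^2)")
    case True
    have "(LINT x:K|lborel. (norm (g x))^2) \<le> (LINT x:K|lborel. \<delta>^2)"
      by (rule set_integral_mono[OF True const_integrable])
        (use bound in \<open>auto intro!: power_mono\<close>)
    also have "\<dots> = \<delta>^2 * measure lborel K"
      using set_integral_const[OF K_sets, of "\<delta>^2"] K_finite by (simp add: less_top mult.commute)
    finally show ?thesis .
  next
    case False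
    then show ?thesis
      unfolding set_lebesgue_integral_def set_integrable_def by (simp add: not_integrable_integral_eq)
  qed
  then have "L2normK K g \<le> sqrt (\<delta>^2 * measure lborel K)"
    unfolding L2normK_def by simp
  also have "\<dots> = \<delta> * sqrt (measure lborel K)"
    using \<open>\<delta> \<ge> 0\<close> by (simp add: real_sqrt_mult)
  finally show ?thesis .
qed

lemma L2normK_small_of_uniform_component_bound:
  fixes K :: "(real^'n) set"
  assumes "compact K" and "\<epsilon> > 0"
  obtains \<delta> where "\<delta> > 0"
    and "\<And>g :: real^'n \<Rightarrow> real^'m. \<forall>x\<in>K. \<forall>k. \<bar>g x $ k\<bar> \<le> \<delta> \<Longrightarrow> L2normK K g < \<epsilon>"
proof
  define s where "s = sqrt (measure lborel K)"
  have "s \<ge> 0"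
    unfolding s_def by simp
  define \<delta> where "\<delta> = \<epsilon> / (CARD('m::finite) * (s + 1))"
  show "\<delta> > 0"
    unfolding \<delta>_def using \<open>\<epsilon> > 0\<close> \<open>s \<ge> 0\<close> by (simp add: add_nonneg_pos)
  fix g :: "real^'n \<Rightarrow> real^'m"
  assume g: "\<forall>x\<in>K. \<forall>k. \<bar>g x $ k\<bar> \<le> \<delta>"
  have "norm (g x) \<le> CARD('m) * \<delta>" if "x \<in> K" for x
  proof -
    have "norm (g x) \<le> (\<Sum>k\<in>UNIV. \<bar>g x $ k\<bar>)"
      by (rule norm_le_l1_cart)
    also have "\<dots> \<le> CARD('m) * \<delta>"
      by (rule sum_bounded_above) (use g that in auto)
    finally show ?thesis .
  qed
  then have "L2normK K g \<le> CARD('m) * \<delta> * s"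
    unfolding s_def using \<open>\<delta> > 0\<close> by (intro L2normK_le_of_norm_bound[OF \<open>compact K\<close>]) auto
  also have "\<dots> = \<epsilon> * (s / (s + 1))"
    unfolding \<delta>_def using \<open>s \<ge> 0\<close> by simp
  also have "\<dots> < \<epsilon>"
    using \<open>\<epsilon> > 0\<close> \<open>s \<ge> 0\<close> by (simp add: mult_less_cancel_left1 divide_less_eq add_nonneg_pos)
  finally show "L2normK K g < \<epsilon>" .
qed

definition exp_sum :: "'a::real_inner set \<Rightarrow> ('a \<Rightarrow> real) \<Rightarrow> 'a \<Rightarrow> real" where
  "exp_sum A c x = (\<Sum>v\<in>A. c v * exp (v \<bullet> x))"

definition exp_sums :: "('a::real_inner \<Rightarrow> real) set" where
  "exp_sums = {exp_sum A c |A c. finite A}"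

lemma exp_sum_extend_frequencies:
  assumes "finite B" and "A \<subseteq> B"
  shows "exp_sum A c = exp_sum B (\<lambda>v. if v \<in> A then c v else 0)"
proof
  fix x
  have "exp_sum B (\<lambda>v. if v \<in> A then c v else 0) x
      = (\<Sum>v\<in>B. if v \<in> A then c v * exp (v \<bullet> x) else 0)"
    unfolding exp_sum_def by (intro sum.cong) auto
  also have "\<dots> = (\<Sum>v\<in>B \<inter> A. c v * exp (v \<bullet> x))"
    by (simp add: sum.inter_restrict[OF \<open>finite B\<close>])
  also have "B \<inter> A = A"
    using \<open>A \<subseteq> B\<close> by auto
  finally show "exp_sum A c x = exp_sum B (\<lambda>v. if v \<in> A then c v else 0) x"
    unfolding exp_sum_def by simp
qed

lemma exp_sums_add:
  fixes f g :: "'a::real_inner \<Rightarrow> real"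
  assumes "f \<in> exp_sums" and "g \<in> exp_sums"
  shows "(\<lambda>x. f x + g x) \<in> exp_sums"
proof -
  obtain A c B d where A: "finite A" "f = exp_sum A c" and B: "finite B" "g = exp_sum B d"
    using assms unfolding exp_sums_def by blast
  let ?c = "\<lambda>v. if v \<in> A then c v else 0" and ?d = "\<lambda>v. if v \<in> B then d v else 0"
  have "f = exp_sum (A \<union> B) ?c" and "g = exp_sum (A \<union> B) ?d"
    unfolding A(2) B(2) using A(1) B(1) by (auto intro: exp_sum_extend_frequencies)
  then have "(\<lambda>x. f x + g x) = exp_sum (A \<union> B) (\<lambda>v. ?c v + ?d v)"
    by (auto simp: exp_sum_def sum.distrib[symmetric] distrib_right)
  then show ?thesis
    using A(1) B(1) unfolding exp_sums_def by blast
qed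

lemma exp_sums_mult:
  fixes f g :: "'a::real_inner \<Rightarrow> real"
  assumes "f \<in> exp_sums" and "g \<in> exp_sums"
  shows "(\<lambda>x. f x * g x) \<in> exp_sums"
proof -
  obtain A c B d where A: "finite A" "f = exp_sum A c" and B: "finite B" "g = exp_sum B d"
    using assms unfolding exp_sums_def by blast
  define P where "P = A \<times> B"
  define s :: "'a \<times> 'a \<Rightarrow> 'a" where "s = (\<lambda>(a, b). a + b)"
  define e where "e = (\<lambda>v. \<Sum>(a, b)\<in>{p\<in>P. s p = v}. c a * d b)"
  have "finite P"
    using A B by (simp add: P_def)
  have "(\<lambda>x. f x * g x) = exp_sum (s ` P) e"
  proof
    fix x
    have "f x * g x = (\<Sum>(a, b)\<in>P. c a * d b * exp (s (a, b) \<bullet> x))"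
      unfolding A B exp_sum_def sum_product P_def s_def sum.cartesian_product
      by (intro sum.cong refl) (auto simp: inner_add_left exp_add algebra_simps)
    also have "\<dots> = (\<Sum>v\<in>s ` P. \<Sum>(a, b)\<in>{p\<in>P. s p = v}. c a * d b * exp (s (a, b) \<bullet> x))"
      using \<open>finite P\<close> by (rule sum.image_gen)
    also have "\<dots> = (\<Sum>v\<in>s ` P. e v * exp (v \<bullet> x))"
      unfolding e_def sum_distrib_right by (intro sum.cong refl) auto
    finally show "f x * g x = exp_sum (s ` P) e x"
      unfolding exp_sum_def .
  qed
  then show ?thesis
    using \<open>finite P\<close> unfolding exp_sums_def by blast
qed

lemma exp_sums_const: "(\<lambda>_. k) \<in> exp_sums"
proof -
  have "(\<lambda>_. k) = exp_sum {0} (\<lambda>_. k)"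
    by (auto simp: exp_sum_def)
  then show ?thesis
    unfolding exp_sums_def by blast
qed

lemma continuous_on_exp_sum: "continuous_on S (exp_sum A c)"
  unfolding exp_sum_def by (intro continuous_intros)

lemma exp_sums_separate_points:
  assumes "x \<noteq> y"
  shows "\<exists>f\<in>exp_sums. f x \<noteq> f y"
proof
  show "exp_sum {x - y} (\<lambda>_. 1) \<in> exp_sums"
    unfolding exp_sums_def by blast
  have "(x - y) \<bullet> x - (x - y) \<bullet> y \<noteq> 0"
    using assms by (simp flip: inner_diff_right)
  then show "exp_sum {x - y} (\<lambda>_. 1) x \<noteq> exp_sum {x - y} (\<lambda>_. 1) y"
    unfolding exp_sum_def by simp
qed

lemma exp_sums_uniformly_dense:
  fixes K :: "'a::real_inner set"
  assumes "compact K" and "continuous_on K f" and "\<eta> > 0"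
  obtains A c where "finite A" and "\<forall>x\<in>K. \<bar>f x - exp_sum A c x\<bar> < \<eta>"
proof -
  interpret function_ring_on exp_sums K
  proof
    show "compact K"
      by (rule assms(1))
    show "continuous_on K f" if "f \<in> exp_sums" for f
      using that unfolding exp_sums_def by (auto intro: continuous_on_exp_sum)
    show "(\<lambda>x. f x + g x) \<in> exp_sums" if "f \<in> exp_sums" and "g \<in> exp_sums" for f g
      using that by (rule exp_sums_add)
    show "(\<lambda>x. f x * g x) \<in> exp_sums" if "f \<in> exp_sums" and "g \<in> exp_sums" for f g
      using that by (rule exp_sums_mult)
    show "(\<lambda>_. c) \<in> exp_sums" for c
      by (rule exp_sums_const)
    show "\<exists>f\<in>exp_sums. f x \<noteq> f y" if "x \<in> K" and "y \<in> K" and "x \<noteq> y" for x y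
      using \<open>x \<noteq> y\<close> by (rule exp_sums_separate_points)
  qed
  show ?thesis
    using Stone_Weierstrass_basic[OF assms(2,3)] that unfolding exp_sums_def by blast
qed

lemma exp_sums_uniformly_dense_common_frequencies:
  fixes K :: "'a::real_inner set" and f :: "'a \<Rightarrow> real^'m"
  assumes "compact K" and "continuous_on K f" and "\<eta> > 0"
  obtains W C where "finite W" and "W \<noteq> {}"
    and "\<forall>x\<in>K. \<forall>k. \<bar>f x $ k - exp_sum W (C k) x\<bar> < \<eta>"
proof -
  have "\<exists>A c. finite A \<and> (\<forall>x\<in>K. \<bar>f x $ k - exp_sum A c x\<bar> < \<eta>)" for k
    by (rule exp_sums_uniformly_dense[OF assms(1) continuous_on_component[OF assms(2)] assms(3)]) blast
  then obtain A c where A: "\<And>k. finite (A k)"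
    and approx: "\<And>k. \<forall>x\<in>K. \<bar>f x $ k - exp_sum (A k) (c k) x\<bar> < \<eta>"
    by metis
  define W where "W = insert 0 (\<Union>k. A k)"
  have "finite W"
    unfolding W_def using A by simp
  then have extend: "exp_sum (A k) (c k) = exp_sum W (\<lambda>v. if v \<in> A k then c k v else 0)" for k
    by (rule exp_sum_extend_frequencies) (auto simp: W_def)
  show ?thesis
  proof (rule that)
    show "finite W" by fact
    show "W \<noteq> {}"
      unfolding W_def by blast
    show "\<forall>x\<in>K. \<forall>k. \<bar>f x $ k - exp_sum W (\<lambda>v. if v \<in> A k then c k v else 0) x\<bar> < \<eta>"
      using approx by (simp flip: extend)
  qed
qed

lemma netU_eq_exp_sum_quotient:
  fixes W :: "(real^'n) set" and C :: "'m::finite \<Rightarrow> real^'n \<Rightarrow> real"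
  assumes "finite W" and "t > 0"
  obtains W1 W2 b where
    "\<And>x k. netU (card W) W1 W2 b x $ k = exp_sum W (C k) x / (1 + t * exp_sum W (\<lambda>_. 1) x)"
proof -
  obtain h where h: "bij_betw h {..<card W} W"
    using ex_bij_betw_nat_finite[OF \<open>finite W\<close>] atLeast0LessThan by metis
  have reindex: "(\<Sum>i<card W. g (h i)) = (\<Sum>v\<in>W. g v)" for g :: "real^'n \<Rightarrow> real"
    by (rule sum.reindex_bij_betw[OF h])
  define W1 where "W1 = (\<lambda>i. (1/2::real) *\<^sub>R h i)"
  define b where "b = (\<lambda>i::nat. ln t / 2)"
  define W2 where "W2 = (\<lambda>k i. C k (h i) / t)"
  have neuron: "exp (2 * (W1 i \<bullet> x + b i)) = t * exp (h i \<bullet> x)" for i x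
  proof -
    have "2 * (W1 i \<bullet> x + b i) = h i \<bullet> x + ln t"
      unfolding W1_def b_def by (simp add: inner_scaleR_left)
    then show ?thesis
      using \<open>t > 0\<close> by (simp add: exp_add)
  qed
  have "netU (card W) W1 W2 b x $ k = exp_sum W (C k) x / (1 + t * exp_sum W (\<lambda>_. 1) x)" for x k
  proof -
    let ?D = "1 + t * exp_sum W (\<lambda>_. 1) x"
    have denominator: "1 + (\<Sum>i<card W. t * exp (h i \<bullet> x)) = ?D"
      using reindex[of "\<lambda>v. exp (v \<bullet> x)"] by (simp add: exp_sum_def flip: sum_distrib_left)
    have "netU (card W) W1 W2 b x $ k = (\<Sum>i<card W. W2 k i * (t * exp (h i \<bullet> x) / ?D))"
      unfolding netU_def sigmaR_def neuron denominator by simp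
    also have "\<dots> = (\<Sum>i<card W. C k (h i) * exp (h i \<bullet> x)) / ?D"
      unfolding sum_divide_distrib W2_def using \<open>t > 0\<close> by (intro sum.cong refl) simp
    also have "\<dots> = exp_sum W (C k) x / ?D"
      unfolding reindex[of "\<lambda>v. C k v * exp (v \<bullet> x)"] exp_sum_def ..
    finally show ?thesis .
  qed
  then show ?thesis
    by (rule that)
qed

lemma abs_divide_one_plus_minus_le:
  fixes g s t :: real
  assumes "s \<ge> 0" and "t \<ge> 0"
  shows "\<bar>g / (1 + t * s) - g\<bar> \<le> t * (\<bar>g\<bar> * s)"
proof -
  have pos: "1 + t * s > 0"
    using assms by (simp add: add_pos_nonneg)
  have "\<bar>g / (1 + t * s) - g\<bar> = \<bar>g\<bar> * (t * s) / (1 + t * s)"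
    using pos assms by (simp add: field_simps abs_mult abs_minus_commute)
  also have "\<dots> \<le> \<bar>g\<bar> * (t * s)"
    using pos assms by (smt (verit) mult_imp_div_pos_le mult_le_cancel_left1 mult_nonneg_nonneg)
  finally show ?thesis
    by (simp add: algebra_simps)
qed

lemma netU_uniformly_approx_exp_sums:
  fixes K :: "(real^'n) set" and C :: "'m::finite \<Rightarrow> real^'n \<Rightarrow> real"
  assumes "compact K" and "finite W" and "\<eta> > 0"
  obtains W1 W2 b where "\<forall>x\<in>K. \<forall>k. \<bar>netU (card W) W1 W2 b x $ k - exp_sum W (C k) x\<bar> < \<eta>"
proof -
  let ?G = "\<lambda>k. exp_sum W (C k)" and ?S = "exp_sum W (\<lambda>_. 1)"
  have S_nonneg: "?S x \<ge> 0" for x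
    by (simp add: exp_sum_def sum_nonneg)
  have "bounded ((\<lambda>x. (\<Sum>k\<in>UNIV. \<bar>?G k x\<bar>) * ?S x) ` K)"
    using \<open>compact K\<close>
    by (intro compact_imp_bounded compact_continuous_image continuous_intros continuous_on_exp_sum)
  then obtain B where "B > 0" and B: "\<And>x. x \<in> K \<Longrightarrow> \<bar>(\<Sum>k\<in>UNIV. \<bar>?G k x\<bar>) * ?S x\<bar> \<le> B"
    unfolding bounded_pos by auto
  have GS_bound: "\<bar>?G k x\<bar> * ?S x \<le> B" if "x \<in> K" for k x
  proof -
    have "\<bar>?G k x\<bar> * ?S x \<le> (\<Sum>k\<in>UNIV. \<bar>?G k x\<bar>) * ?S x"
      using S_nonneg by (intro mult_right_mono member_le_sum) auto
    also have "\<dots> \<le> B"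
      using B[OF that] by linarith
    finally show ?thesis .
  qed
  define t where "t = \<eta> / (B + 1)"
  have "t > 0" and "t * B < \<eta>"
    unfolding t_def using \<open>\<eta> > 0\<close> \<open>B > 0\<close> by (simp_all add: field_simps)
  obtain W1 W2 b where net: "\<And>x k. netU (card W) W1 W2 b x $ k = ?G k x / (1 + t * ?S x)"
    using netU_eq_exp_sum_quotient[OF \<open>finite W\<close> \<open>t > 0\<close>] by metis
  have "\<bar>netU (card W) W1 W2 b x $ k - ?G k x\<bar> < \<eta>" if "x \<in> K" for x k
  proof -
    have "\<bar>netU (card W) W1 W2 b x $ k - ?G k x\<bar> \<le> t * (\<bar>?G k x\<bar> * ?S x)"
      unfolding net using S_nonneg \<open>t > 0\<close> by (intro abs_divide_one_plus_minus_le) auto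
    also have "\<dots> \<le> t * B"
      using GS_bound[OF that] \<open>t > 0\<close> by (intro mult_left_mono) auto
    finally show ?thesis
      using \<open>t * B < \<eta>\<close> by linarith
  qed
  then show ?thesis
    using that by blast
qed

theorem theorem5:
  fixes K :: "(real^'n) set" and f :: "real^'n \<Rightarrow> real^'m" and \<epsilon> :: real
  assumes "compact K" and "continuous_on K f" and "\<epsilon> > 0"
  shows "\<exists>d2::nat. d2 > 0 \<and> (\<exists>W1 W2 b.
           L2normK K (\<lambda>x. netU d2 W1 W2 b x - f x) < \<epsilon>)"
proof -
  obtain \<delta> where "\<delta> > 0"
    and L2_small: "\<And>g :: real^'n \<Rightarrow> real^'m. \<forall>x\<in>K. \<forall>k. \<bar>g x $ k\<bar> \<le> \<delta> \<Longrightarrow> L2normK K g < \<epsilon>"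
    using L2normK_small_of_uniform_component_bound[OF \<open>compact K\<close> \<open>\<epsilon> > 0\<close>] by metis
  obtain W C where "finite W" and "W \<noteq> {}"
    and f_approx: "\<forall>x\<in>K. \<forall>k. \<bar>f x $ k - exp_sum W (C k) x\<bar> < \<delta> / 2"
    using exp_sums_uniformly_dense_common_frequencies[OF assms(1,2)] \<open>\<delta> > 0\<close> by (metis half_gt_zero)
  obtain W1 W2 b
    where net_approx: "\<forall>x\<in>K. \<forall>k. \<bar>netU (card W) W1 W2 b x $ k - exp_sum W (C k) x\<bar> < \<delta> / 2"
    using netU_uniformly_approx_exp_sums[OF \<open>compact K\<close> \<open>finite W\<close>] \<open>\<delta> > 0\<close> by (metis half_gt_zero)
  have "\<forall>x\<in>K. \<forall>k. \<bar>(netU (card W) W1 W2 b x - f x) $ k\<bar> \<le> \<delta>"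
  proof (intro ballI allI)
    fix x k
    assume "x \<in> K"
    then have "\<bar>f x $ k - exp_sum W (C k) x\<bar> < \<delta> / 2"
      and "\<bar>netU (card W) W1 W2 b x $ k - exp_sum W (C k) x\<bar> < \<delta> / 2"
      using f_approx net_approx by auto
    then show "\<bar>(netU (card W) W1 W2 b x - f x) $ k\<bar> \<le> \<delta>"
      by (simp only: vector_minus_component)
  qed
  then have "L2normK K (\<lambda>x. netU (card W) W1 W2 b x - f x) < \<epsilon>"
    by (rule L2_small)
  moreover have "card W > 0"
    using \<open>finite W\<close> \<open>W \<noteq> {}\<close> by (simp add: card_gt_0_iff)
  ultimately show ?thesis
    by blast
qed

end
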